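(* Let $X,Y$ be real Banach spaces with a bilinear map $\langle\cdot,\cdot\rangle\colon X\times Y\to\mathbb{R}$ satisfying (B1)–(B5) below. Let $\mathcal{I}\subset\mathbb{N}$ be infinite, $n\in\mathbb{N}$, $L\in2\mathbb{N}$ and $\eta>0$. Then for all bounded sequences $(x_j)$ in $X$ and $(y_j)$ in $Y$ there exists an infinite set $\Lambda\subset\mathcal{I}$ such that $$\sup\Bigl\{\Bigl|\Bigl\langle\sum_{k\in\mathcal{B}}\varepsilon_kx_k,y_j\Bigr\rangle\Bigr|:\mathcal{B}\subset\Lambda,\ |\mathcal{B}|=L,\ \varepsilon\in\mathcal{E}(\mathcal{B}),\ 1\le j\le n\Bigr\}\le\eta,$$ $$\sup\Bigl\{\Bigl|\Bigl\langle x_j,\sum_{k\in\mathcal{B}}\varepsilon_ky_k\Bigr\rangle\Bigr|:\mathcal{B}\subset\Lambda,\ |\mathcal{B}|=L,\ \varepsilon\in\mathcal{E}(\mathcal{B}),\ 1\le j\le n\Bigr\}\le\eta,$$ where $\mathcal{E}(\mathcal{B})=\{(\varepsilon_k)\in\{\pm1\}^{\mathcal{B}}:\sum_{k\in\mathcal{B}}\varepsilon_k=0\}$.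
   Context: Standing assumptions: (B1) if $\langle x,y\rangle=0$ for all $y\in Y$ then $x=0$; (B2) if $\langle x,y\rangle=0$ for all $x\in X$ then $y=0$; (B3) there is $C_d>0$ with $|\langle x,y\rangle|\le C_d\|x\|\|y\|$; and there are normalized sequences $(e_j)\subset X$, $(f_j)\subset Y$ with (B4) $\langle e_j,f_k\rangle=1$ if $j=k$ and $0$ otherwise, and (B5) every $x\in X$ has the unique representation $x=\sum_j\langle x,f_j\rangle e_j$ converging in $\sigma(X,Y)$, the locally convex topology on $X$ generated by the seminorms $x\mapsto|\langle x,y\rangle|$, $y\in Y$. *)

theory Defs
  imports "HOL-Analysis.Analysis"
begin

text \<open>Standing assumptions (B1)--(B5) on a bilinear pairing p between real Banach
spaces, with a normalized biorthogonal system (e, f).  Convergence in sigma(X,Y)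
of a series means convergence of the pairing of partial sums with every y.\<close>

definition dual_pair_with_basis ::
  "('a::banach \<Rightarrow> 'b::banach \<Rightarrow> real) \<Rightarrow> (nat \<Rightarrow> 'a) \<Rightarrow> (nat \<Rightarrow> 'b) \<Rightarrow> bool" where
  "dual_pair_with_basis p e f \<longleftrightarrow>
     bilinear p \<and>
     (\<forall>x. (\<forall>y. p x y = 0) \<longrightarrow> x = 0) \<and>
     (\<forall>y. (\<forall>x. p x y = 0) \<longrightarrow> y = 0) \<and>
     (\<exists>C>0. \<forall>x y. \<bar>p x y\<bar> \<le> C * norm x * norm y) \<and>
     (\<forall>j. norm (e j) = 1) \<and> (\<forall>j. norm (f j) = 1) \<and>
     (\<forall>j k. p (e j) (f k) = (if j = k then 1 else 0)) \<and>
     (\<forall>x y. (\<lambda>N. p (\<Sum>j<N. p x (f j) *\<^sub>R e j) y) \<longlonglongrightarrow> p x y) \<and>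
     (\<forall>x a. (\<forall>y. (\<lambda>N. p (\<Sum>j<N. a j *\<^sub>R e j) y) \<longlonglongrightarrow> p x y)
            \<longrightarrow> (\<forall>j. a j = p x (f j)))"

definition balanced_signs :: "nat set \<Rightarrow> (nat \<Rightarrow> real) set" where
  "balanced_signs B = {\<epsilon>. (\<forall>k\<in>B. \<epsilon> k = 1 \<or> \<epsilon> k = -1) \<and> (\<Sum>k\<in>B. \<epsilon> k) = 0}"

end

theory Submission
  imports Defs
begin

text \<open>All pairings \<open>p (x k) (y j)\<close> and \<open>p (x j) (y k)\<close>, \<open>1 \<le> j \<le> n\<close>, are bounded, so rounding
them down to a grid of mesh \<open>\<delta>\<close> leaves only finitely many patterns as \<open>k\<close> ranges over \<open>I\<close>.
By the pigeonhole principle infinitely many \<open>k\<close> share one pattern; on that set \<open>\<Lambda>\<close> each of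
these pairings varies by less than \<open>\<delta>\<close>. Since a balanced sign vector has zero sum,
\<open>\<Sum>\<^sub>k \<epsilon>\<^sub>k a\<^sub>k = \<Sum>\<^sub>k \<epsilon>\<^sub>k (a\<^sub>k - a\<^sub>k\<^sub>0)\<close>, which is at most \<open>L \<delta> \<le> \<eta>\<close> in absolute value.\<close>

lemma dual_pair_with_basis_bounded_bilinear:
  assumes "dual_pair_with_basis p e f"
  shows "bounded_bilinear p"
proof
  have bil: "bilinear p" and "\<exists>C>0. \<forall>u v. \<bar>p u v\<bar> \<le> C * norm u * norm v"
    using assms unfolding dual_pair_with_basis_def by blast+
  then obtain C where C: "\<And>u v. \<bar>p u v\<bar> \<le> C * norm u * norm v"
    by blast
  show "p (u + u') v = p u v + p u' v" "p u (v + v') = p u v + p u v'"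
    "p (r *\<^sub>R u) v = r *\<^sub>R p u v" "p u (r *\<^sub>R v) = r *\<^sub>R p u v" for u u' v v' r
    using bil by (simp_all add: bilinear_ladd bilinear_radd bilinear_lmul bilinear_rmul)
  show "\<exists>K. \<forall>u v. norm (p u v) \<le> norm u * norm v * K"
    using C by (auto simp: mult_ac)
qed

lemma (in bounded_bilinear) bounded_on_bounded_sets:
  assumes "bounded A" and "bounded B"
  shows "\<exists>M. \<forall>a\<in>A. \<forall>b\<in>B. norm (prod a b) \<le> M"
proof -
  obtain K where K: "K \<ge> 0" "\<And>a b. norm (prod a b) \<le> norm a * norm b * K"
    using nonneg_bounded by blast
  obtain MA MB where MA: "\<forall>a\<in>A. norm a \<le> MA" and MB: "\<forall>b\<in>B. norm b \<le> MB"
    using assms bounded_iff by metis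
  have "norm (prod a b) \<le> MA * MB * K" if "a \<in> A" "b \<in> B" for a b
  proof -
    have "norm a * norm b \<le> MA * MB"
      using that MA MB by (intro mult_mono) (auto intro: order_trans[OF norm_ge_zero])
    then show ?thesis
      using K by (meson mult_right_mono order_trans)
  qed
  then show ?thesis by blast
qed

lemma abs_diff_less_if_floor_divide_eq:
  fixes u v \<delta> :: real
  assumes "\<delta> > 0" and "\<lfloor>u / \<delta>\<rfloor> = \<lfloor>v / \<delta>\<rfloor>"
  shows "\<bar>u - v\<bar> < \<delta>"
proof -
  have "real_of_int \<lfloor>u / \<delta>\<rfloor> = real_of_int \<lfloor>v / \<delta>\<rfloor>"
    using assms(2) by simp
  then have "\<bar>u / \<delta> - v / \<delta>\<bar> < 1"
    using floor_correct[of "u / \<delta>"] floor_correct[of "v / \<delta>"] by linarith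
  then have "\<bar>u - v\<bar> / \<delta> < 1"
    using assms(1) by (simp add: abs_div_pos diff_divide_distrib)
  then show ?thesis
    using assms(1) by (simp add: pos_divide_less_eq)
qed

lemma infinite_subset_small_oscillation:
  fixes a :: "'j \<Rightarrow> 'i \<Rightarrow> real"
  assumes "infinite I" and "finite J" and "\<delta> > 0"
    and bounded: "\<And>j k. j \<in> J \<Longrightarrow> k \<in> I \<Longrightarrow> \<bar>a j k\<bar> \<le> M"
  shows "\<exists>\<Lambda>\<subseteq>I. infinite \<Lambda> \<and> (\<forall>j\<in>J. \<forall>k\<in>\<Lambda>. \<forall>k'\<in>\<Lambda>. \<bar>a j k - a j k'\<bar> < \<delta>)"
proof -
  define pattern where "pattern k = restrict (\<lambda>j. \<lfloor>a j k / \<delta>\<rfloor>) J" for k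
  have "\<lfloor>a j k / \<delta>\<rfloor> \<in> {\<lfloor>- M / \<delta>\<rfloor>..\<lfloor>M / \<delta>\<rfloor>}" if "j \<in> J" "k \<in> I" for j k
    using bounded[OF that] \<open>\<delta> > 0\<close>
      divide_right_mono[of "- M" "a j k" \<delta>] divide_right_mono[of "a j k" M \<delta>]
    by (auto intro!: floor_mono simp: abs_le_iff)
  then have "pattern ` I \<subseteq> (\<Pi>\<^sub>E j\<in>J. {\<lfloor>- M / \<delta>\<rfloor>..\<lfloor>M / \<delta>\<rfloor>})"
    by (auto simp: pattern_def)
  then have "finite (pattern ` I)"
    using \<open>finite J\<close> by (blast intro: finite_subset finite_PiE)
  then obtain k0 where "infinite {k\<in>I. pattern k = pattern k0}"
    using pigeonhole_infinite[OF \<open>infinite I\<close>] by blast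
  moreover have "\<bar>a j k - a j k'\<bar> < \<delta>"
    if "j \<in> J" and "pattern k = pattern k'" for j k k'
  proof (rule abs_diff_less_if_floor_divide_eq[OF \<open>\<delta> > 0\<close>])
    show "\<lfloor>a j k / \<delta>\<rfloor> = \<lfloor>a j k' / \<delta>\<rfloor>"
      using fun_cong[OF that(2), of j] that(1) by (simp add: pattern_def)
  qed
  ultimately show ?thesis
    by (intro exI[of _ "{k\<in>I. pattern k = pattern k0}"]) auto
qed

lemma balanced_signs_sum_bound:
  fixes a :: "nat \<Rightarrow> real"
  assumes "\<epsilon> \<in> balanced_signs B"
    and oscillation: "\<And>k k'. k \<in> B \<Longrightarrow> k' \<in> B \<Longrightarrow> \<bar>a k - a k'\<bar> \<le> \<delta>"
  shows "\<bar>\<Sum>k\<in>B. \<epsilon> k * a k\<bar> \<le> real (card B) * \<delta>"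
proof (cases "B = {}")
  case False
  then obtain k0 where k0: "k0 \<in> B" by blast
  have signs: "\<And>k. k \<in> B \<Longrightarrow> \<bar>\<epsilon> k\<bar> = 1" and "(\<Sum>k\<in>B. \<epsilon> k) = 0"
    using assms(1) by (auto simp: balanced_signs_def)
  then have "(\<Sum>k\<in>B. \<epsilon> k * a k) = (\<Sum>k\<in>B. \<epsilon> k * (a k - a k0))"
    by (simp add: right_diff_distrib sum_subtractf flip: sum_distrib_right)
  also have "\<bar>\<dots>\<bar> \<le> (\<Sum>k\<in>B. \<bar>\<epsilon> k * (a k - a k0)\<bar>)"
    by (rule sum_abs)
  also have "\<dots> \<le> real (card B) * \<delta>"
    using signs oscillation k0 by (intro sum_bounded_above) (simp add: abs_mult)
  finally show ?thesis .
qed simp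

lemma infinite_subset_balanced_sums_small:
  fixes a :: "'j \<Rightarrow> nat \<Rightarrow> real"
  assumes "infinite I" and "finite J" and "\<eta> > 0"
    and bounded: "\<And>j k. j \<in> J \<Longrightarrow> k \<in> I \<Longrightarrow> \<bar>a j k\<bar> \<le> M"
  shows "\<exists>\<Lambda>\<subseteq>I. infinite \<Lambda> \<and> (\<forall>B \<epsilon> j. B \<subseteq> \<Lambda> \<and> card B = L \<and> \<epsilon> \<in> balanced_signs B \<and> j \<in> J \<longrightarrow>
      \<bar>\<Sum>k\<in>B. \<epsilon> k * a j k\<bar> \<le> \<eta>)"
proof -
  define \<delta> where "\<delta> = \<eta> / (real L + 1)"
  have "\<delta> > 0"
    using \<open>\<eta> > 0\<close> by (simp add: \<delta>_def)
  have L\<delta>: "real L * \<delta> \<le> \<eta>"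
    using \<open>\<eta> > 0\<close> by (simp add: \<delta>_def field_simps)
  obtain \<Lambda> where "\<Lambda> \<subseteq> I" "infinite \<Lambda>" and oscillation:
    "\<And>j k k'. j \<in> J \<Longrightarrow> k \<in> \<Lambda> \<Longrightarrow> k' \<in> \<Lambda> \<Longrightarrow> \<bar>a j k - a j k'\<bar> < \<delta>"
    using infinite_subset_small_oscillation[of I J \<delta> a M] assms(1,2) \<open>\<delta> > 0\<close> bounded by blast
  have "\<bar>\<Sum>k\<in>B. \<epsilon> k * a j k\<bar> \<le> \<eta>"
    if "B \<subseteq> \<Lambda>" "card B = L" "\<epsilon> \<in> balanced_signs B" "j \<in> J" for B \<epsilon> j
  proof -
    have "\<bar>\<Sum>k\<in>B. \<epsilon> k * a j k\<bar> \<le> real (card B) * \<delta>"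
    proof (rule balanced_signs_sum_bound[OF \<open>\<epsilon> \<in> balanced_signs B\<close>])
      show "\<bar>a j k - a j k'\<bar> \<le> \<delta>" if "k \<in> B" "k' \<in> B" for k k'
        using oscillation[OF \<open>j \<in> J\<close>] \<open>B \<subseteq> \<Lambda>\<close> that by (meson less_imp_le subsetD)
    qed
    then show ?thesis
      using \<open>card B = L\<close> L\<delta> by simp
  qed
  then show ?thesis
    using \<open>\<Lambda> \<subseteq> I\<close> \<open>infinite \<Lambda>\<close> by blast
qed

theorem lemma3p1:
  fixes p :: "'a::banach \<Rightarrow> 'b::banach \<Rightarrow> real"
    and e :: "nat \<Rightarrow> 'a" and f :: "nat \<Rightarrow> 'b"
    and I :: "nat set" and n L :: nat and \<eta> :: real
    and x :: "nat \<Rightarrow> 'a" and y :: "nat \<Rightarrow> 'b"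
  assumes "dual_pair_with_basis p e f"
    and "infinite I" and "even L" and "\<eta> > 0"
    and "bounded (range x)" and "bounded (range y)"
  shows "\<exists>\<Lambda>. \<Lambda> \<subseteq> I \<and> infinite \<Lambda> \<and>
     (\<forall>B \<epsilon> j. B \<subseteq> \<Lambda> \<and> finite B \<and> card B = L \<and> \<epsilon> \<in> balanced_signs B \<and> 1 \<le> j \<and> j \<le> n
        \<longrightarrow> \<bar>p (\<Sum>k\<in>B. \<epsilon> k *\<^sub>R x k) (y j)\<bar> \<le> \<eta>) \<and>
     (\<forall>B \<epsilon> j. B \<subseteq> \<Lambda> \<and> finite B \<and> card B = L \<and> \<epsilon> \<in> balanced_signs B \<and> 1 \<le> j \<and> j \<le> n
        \<longrightarrow> \<bar>p (x j) (\<Sum>k\<in>B. \<epsilon> k *\<^sub>R y k)\<bar> \<le> \<eta>)"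
proof -
  interpret p: bounded_bilinear p
    using assms(1) by (rule dual_pair_with_basis_bounded_bilinear)
  obtain M where M: "\<And>k j. \<bar>p (x k) (y j)\<bar> \<le> M"
    using p.bounded_on_bounded_sets[OF assms(5,6)] by (metis rangeI real_norm_def)
  obtain \<Lambda>\<^sub>1 where "\<Lambda>\<^sub>1 \<subseteq> I" "infinite \<Lambda>\<^sub>1" and small\<^sub>1:
    "\<And>B \<epsilon> j. B \<subseteq> \<Lambda>\<^sub>1 \<Longrightarrow> card B = L \<Longrightarrow> \<epsilon> \<in> balanced_signs B \<Longrightarrow> j \<in> {1..n} \<Longrightarrow>
      \<bar>\<Sum>k\<in>B. \<epsilon> k * p (x k) (y j)\<bar> \<le> \<eta>"
    using infinite_subset_balanced_sums_small[of I "{1..n}" \<eta> "\<lambda>j k. p (x k) (y j)" M L]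
      assms(2,4) M
    by auto
  obtain \<Lambda> where "\<Lambda> \<subseteq> \<Lambda>\<^sub>1" "infinite \<Lambda>" and small:
    "\<And>B \<epsilon> j. B \<subseteq> \<Lambda> \<Longrightarrow> card B = L \<Longrightarrow> \<epsilon> \<in> balanced_signs B \<Longrightarrow> j \<in> {1..n} \<Longrightarrow>
      \<bar>\<Sum>k\<in>B. \<epsilon> k * p (x j) (y k)\<bar> \<le> \<eta>"
    using infinite_subset_balanced_sums_small[of \<Lambda>\<^sub>1 "{1..n}" \<eta> "\<lambda>j k. p (x j) (y k)" M L]
      \<open>infinite \<Lambda>\<^sub>1\<close> assms(4) M
    by auto
  have "\<Lambda> \<subseteq> I"
    using \<open>\<Lambda> \<subseteq> \<Lambda>\<^sub>1\<close> \<open>\<Lambda>\<^sub>1 \<subseteq> I\<close> by blast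
  moreover have "\<bar>p (\<Sum>k\<in>B. \<epsilon> k *\<^sub>R x k) (y j)\<bar> \<le> \<eta>"
    if "B \<subseteq> \<Lambda>" "card B = L" "\<epsilon> \<in> balanced_signs B" "j \<in> {1..n}" for B \<epsilon> j
    using small\<^sub>1[of B \<epsilon> j] that \<open>\<Lambda> \<subseteq> \<Lambda>\<^sub>1\<close> by (simp add: p.sum_left p.scaleR_left)
  moreover have "\<bar>p (x j) (\<Sum>k\<in>B. \<epsilon> k *\<^sub>R y k)\<bar> \<le> \<eta>"
    if "B \<subseteq> \<Lambda>" "card B = L" "\<epsilon> \<in> balanced_signs B" "j \<in> {1..n}" for B \<epsilon> j
    using small[OF that] by (simp add: p.sum_right p.scaleR_right)
  ultimately show ?thesis
    using \<open>infinite \<Lambda>\<close> by (intro exI[of _ \<Lambda>]) auto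
qed

end
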